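(* Let $T_i,T_j$ be indecomposable summands of a basic maximal rigid object $T$ of $\mathcal{C}_n$, and let $T_1$ be the top summand of $T$. The following are equivalent: (a) there is a nonzero $\mathcal{D}$-map $T_i\to T_j$; (b) either (b') there is a non-degenerate $T$-subwing triple $(T_x;T_y,T_z)$ such that $T_i$ is on the left edge of $\mathcal{W}_{T_z}$ and $T_j$ is on the right edge of $\mathcal{W}_{T_y}$, or (b'') $T_i$ is on the left edge of $\mathcal{W}_{T_1}$ and $T_j$ is on the right edge of $\mathcal{W}_{T_1}$.
   Context: Let $k$ be algebraically closed, $n\ge2$, $\mathcal{T}_n$ the tube of rank $n$ (finite-dimensional nilpotent representations of the cyclically oriented $\tilde A_{n-1}$-quiver; AR-translation $\tau$), $\mathcal{C}_n=D^b(\mathcal{T}_n)/\tau^{-1}[1]$ the cluster tube, with indecomposables identified with those of $\mathcal{T}_n$. Indecomposables have coordinates $(a,b)$, $a\in\mathbb{Z}/n$, $b\ge1$ the quasilength, with $\tau(a,b)=(a-1,b)$ and irreducible maps $(a,b)\to(a,b+1)$ and $(a,b)\to(a+1,b-1)$. For indecomposables $X,Y$, $\operatorname{Hom}_{\mathcal{C}_n}(X,Y)=\operatorname{Hom}_{\mathcal{T}_n}(X,Y)\oplus\operatorname{Hom}_{D^b}(X,\tau^{-1}Y[1])$, the second summand $\cong D\operatorname{Hom}_{\mathcal{T}_n}(Y,\tau^2X)$; its elements are $\mathcal{D}$-maps. For $X=(a,i)$, $i\le n-1$, the wing $\mathcal{W}_X=\{(a+s,i'):s\ge0,i'\ge1,s+i'\le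 i\}$ has left edge $\{(a,i'):1\le i'\le i\}$ and right edge $\{(a+i-i',i'):1\le i'\le i\}$. $T$ is maximal rigid if $\operatorname{Ext}^1_{\mathcal{C}_n}(T,T)=0$ and $\operatorname{Ext}^1(T\oplus X,T\oplus X)=0$ implies $X\in\operatorname{add}T$; a basic one has a unique summand $T_1$ (top summand) of quasilength $n-1$, and all summands lie in $\mathcal{W}_{T_1}$. A non-degenerate subwing triple $(X;Y,Z)$: $X=(a,b)$ with $3\le b\le n-1$, $Y=(a,c)$, $Z=(a+c+1,b-c-1)$ for some $1\le c\le b-2$; it is a $T$-subwing triple if $X,Y,Z$ are summands of $T$. *)

theory Defs
  imports "HOL-Computational_Algebra.Polynomial"
begin

text \<open>Indecomposable objects of the tube T_n (equivalently of the cluster tube C_n):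
  pairs (a,b) with a in {0..<n} (representing Z/n) and quasilength b >= 1.\<close>

type_synonym obj = "nat \<times> nat"

definition ind :: "nat \<Rightarrow> obj \<Rightarrow> bool" where
  "ind n X \<longleftrightarrow> fst X < n \<and> 1 \<le> snd X"

definition tau :: "nat \<Rightarrow> obj \<Rightarrow> obj" where
  "tau n X = ((fst X + n - 1) mod n, snd X)"

text \<open>Concrete model of the indecomposable nilpotent representation (a,b) of the cyclic
  quiver: basis e_0,...,e_(b-1), e_i lying at vertex (a+i) mod n, arrow action N e_(i+1) = e_i,
  N e_0 = 0 (so e_0 spans the simple socle at vertex a).  A morphism (a,b) -> (c,d) is a matrix F
  (f(e_i) = sum_j F j i e_j) respecting the vertex grading and commuting with the arrows.\<close>
definition homT :: "nat \<Rightarrow> obj \<Rightarrow> obj \<Rightarrow> (nat \<Rightarrow> nat \<Rightarrow> 'k::field) set" where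
  "homT n X Y = {F.
     (\<forall>j i. (i \<ge> snd X \<or> j \<ge> snd Y) \<longrightarrow> F j i = 0) \<and>
     (\<forall>j i. F j i \<noteq> 0 \<longrightarrow> (fst X + i) mod n = (fst Y + j) mod n) \<and>
     (\<forall>i < snd X. \<forall>j < snd Y.
        (if 0 < i then F j (i - 1) else 0) = (if j + 1 < snd Y then F (j + 1) i else 0))}"

definition homT_nz :: "'k::field itself \<Rightarrow> nat \<Rightarrow> obj \<Rightarrow> obj \<Rightarrow> bool" where
  "homT_nz K n X Y \<longleftrightarrow> (\<exists>F::nat \<Rightarrow> nat \<Rightarrow> 'k. F \<in> homT n X Y \<and> F \<noteq> (\<lambda>_ _. 0))"

text \<open>Nonzero D-map X -> Y in C_n: Hom_D(X, tau^-1 Y[1]) = D Hom_T(Y, tau^2 X) is nonzero.\<close>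
definition Dmap_nz :: "'k::field itself \<Rightarrow> nat \<Rightarrow> obj \<Rightarrow> obj \<Rightarrow> bool" where
  "Dmap_nz K n X Y \<longleftrightarrow> homT_nz K n Y (tau n (tau n X))"

text \<open>Ext^1_C(X,Y) = Hom_C(X, tau Y) = Hom_T(X, tau Y) + D Hom_T(Y, tau X).\<close>
definition ExtC_zero :: "'k::field itself \<Rightarrow> nat \<Rightarrow> obj \<Rightarrow> obj \<Rightarrow> bool" where
  "ExtC_zero K n X Y \<longleftrightarrow> \<not> homT_nz K n X (tau n Y) \<and> \<not> homT_nz K n Y (tau n X)"

text \<open>A basic object is given by its (finite) set of pairwise non-isomorphic indecomposable summands.\<close>
definition rigid :: "'k::field itself \<Rightarrow> nat \<Rightarrow> obj set \<Rightarrow> bool" where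
  "rigid K n T \<longleftrightarrow> (\<forall>X\<in>T. \<forall>Y\<in>T. ExtC_zero K n X Y)"

definition maximal_rigid :: "'k::field itself \<Rightarrow> nat \<Rightarrow> obj set \<Rightarrow> bool" where
  "maximal_rigid K n T \<longleftrightarrow> finite T \<and> (\<forall>X\<in>T. ind n X) \<and> rigid K n T \<and>
     (\<forall>X. ind n X \<longrightarrow> rigid K n (insert X T) \<longrightarrow> X \<in> T)"

definition left_edge :: "nat \<Rightarrow> obj \<Rightarrow> obj set" where
  "left_edge n X = {(fst X, i') | i'. 1 \<le> i' \<and> i' \<le> snd X}"

definition right_edge :: "nat \<Rightarrow> obj \<Rightarrow> obj set" where
  "right_edge n X = {((fst X + snd X - i') mod n, i') | i'. 1 \<le> i' \<and> i' \<le> snd X}"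

definition wing :: "nat \<Rightarrow> obj \<Rightarrow> obj set" where
  "wing n X = {((fst X + s) mod n, i') | s i'. 1 \<le> i' \<and> s + i' \<le> snd X}"

definition subwing_triple :: "nat \<Rightarrow> obj \<Rightarrow> obj \<Rightarrow> obj \<Rightarrow> bool" where
  "subwing_triple n X Y Z \<longleftrightarrow> (\<exists>a b c. a < n \<and> X = (a, b) \<and> 3 \<le> b \<and> b \<le> n - 1 \<and>
      1 \<le> c \<and> c \<le> b - 2 \<and> Y = (a, c) \<and> Z = ((a + c + 1) mod n, b - c - 1))"

end

theory Submission imports Defs "HOL-Number_Theory.Cong" begin

text \<open>Write the top summand as T1 = (t, n - 1).  An object (t + p, b) of the wing of T1 is the
  arc [p, p + b] of the segment [0, n - 1]; Ext vanishes between two such objects exactly when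
  their arcs do not cross, and the rigidity of T against T1 puts every summand of T in this wing.
  For summands, a nonzero D-map Ti -> Tj means that the arc of Ti starts right after the arc of
  Tj ends, or that Ti starts at 0 and Tj ends at n - 1; the latter is (b'').  In the former case
  let X be the shortest summand whose arc encloses both.  Cutting the arc of X at the junction
  yields two arcs Y and Z crossing no summand, so by maximality they are summands of T, and
  (X; Y, Z) is a subwing triple with Ti on the left edge of Z and Tj on the right edge of Y.\<close>

lemma homTD:
  assumes "F \<in> homT n (a, b) (c, d)"
  shows homT_support: "F j i \<noteq> 0 \<Longrightarrow> i < b \<and> j < d"
    and homT_grading: "F j i \<noteq> 0 \<Longrightarrow> (a + i) mod n = (c + j) mod n"
    and homT_commutes: "i < b \<Longrightarrow> j < d \<Longrightarrow>
      (if 0 < i then F j (i - 1) else 0) = (if j + 1 < d then F (j + 1) i else 0)"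
proof -
  have "\<forall>j i. i \<ge> b \<or> j \<ge> d \<longrightarrow> F j i = 0" using assms unfolding homT_def by simp
  then show "F j i \<noteq> 0 \<Longrightarrow> i < b \<and> j < d" by (meson not_le)
qed (use assms in \<open>auto simp: homT_def\<close>)

lemma homT_entry_shift:
  assumes F: "F \<in> homT n (a, b) (c, d)" and nz: "F j i \<noteq> 0"
  shows "j \<le> i \<and> F 0 (i - j) \<noteq> 0"
  using nz
proof (induction j arbitrary: i)
  case (Suc j)
  have "i < b" "Suc j < d" using homT_support[OF F Suc.prems] by auto
  with homT_commutes[OF F, of i j] Suc.prems have "0 < i" "F j (i - 1) \<noteq> 0"
    by (auto split: if_splits)
  with Suc.IH[of "i - 1"] show ?case by (auto simp: diff_diff_left)
qed simp

lemma homT_diagonal_const: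
  assumes F: "F \<in> homT n (a, b) (c, d)"
  shows "k < d \<Longrightarrow> i + k < b \<Longrightarrow> F k (i + k) = F 0 i"
proof (induction k)
  case (Suc k)
  with homT_commutes[OF F, of "i + Suc k" k] show ?case by simp
qed simp

text \<open>A nonzero map (a, b) -> (c, d) kills the bottom i layers of (a, b) and embeds the
  remaining quotient of length b - i into (c, d), matching its socle vertex a + i with c.\<close>
lemma homT_nz_iff:
  "homT_nz (K::'k::field itself) n (a, b) (c, d) \<longleftrightarrow>
     (\<exists>i<b. b - i \<le> d \<and> (a + i) mod n = c mod n)"
proof
  assume "homT_nz K n (a, b) (c, d)"
  then obtain F :: "nat \<Rightarrow> nat \<Rightarrow> 'k" where F: "F \<in> homT n (a, b) (c, d)"
    and "F \<noteq> (\<lambda>_ _. 0)"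
    unfolding homT_nz_def by blast
  then obtain j i where "F j i \<noteq> 0" by (meson ext)
  then obtain i0 where F0: "F 0 i0 \<noteq> 0" using homT_entry_shift[OF F] by blast
  have "i0 < b" "0 < d" using homT_support[OF F F0] by auto
  have "b - i0 \<le> d"
  proof (rule ccontr)
    assume "\<not> b - i0 \<le> d"
    then have lt: "i0 + d < b" by simp
    have "F (d - 1) (i0 + (d - 1)) = F 0 i0"
      using homT_diagonal_const[OF F, of "d - 1" i0] lt \<open>0 < d\<close> by simp
    moreover have "F (d - 1) (i0 + (d - 1)) = 0"
      using homT_commutes[OF F, of "i0 + d" "d - 1"] lt \<open>0 < d\<close> by (simp add: Suc_diff_Suc)
    ultimately show False using F0 by simp
  qed
  moreover have "(a + i0) mod n = c mod n" using homT_grading[OF F F0] by simp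
  ultimately show "\<exists>i<b. b - i \<le> d \<and> (a + i) mod n = c mod n" using \<open>i0 < b\<close> by blast
next
  assume "\<exists>i<b. b - i \<le> d \<and> (a + i) mod n = c mod n"
  then obtain i0 where i0: "i0 < b" "b - i0 \<le> d" "(a + i0) mod n = c mod n" by blast
  define F :: "nat \<Rightarrow> nat \<Rightarrow> 'k" where "F j i = (if j < d \<and> i = j + i0 \<and> i < b then 1 else 0)"
    for j i
  have "(a + (j + i0)) mod n = (c + j) mod n" for j
    using i0(3) by (metis add.assoc add.commute mod_add_left_eq)
  then have "F \<in> homT n (a, b) (c, d)"
    using i0 unfolding homT_def F_def by auto
  moreover have "F 0 i0 \<noteq> 0" using i0 by (simp add: F_def)
  ultimately show "homT_nz K n (a, b) (c, d)" unfolding homT_nz_def by (metis (no_types))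
qed

lemma add_mod_cancel_left: "(t + x) mod n = (t + y) mod n \<longleftrightarrow> x mod n = y mod (n::nat)"
  using cong_add_lcancel_nat[of t x y n] unfolding cong_def .

lemma homT_nz_offsets_iff:
  "homT_nz (K::'k::field itself) n ((t + p) mod n, b) ((t + s) mod n, d) \<longleftrightarrow>
     (\<exists>i<b. b - i \<le> d \<and> (p + i) mod n = s mod n)"
  unfolding homT_nz_iff by (simp add: mod_add_left_eq add_mod_cancel_left add.assoc)

lemma homT_nz_offsets_in_range_iff:
  assumes "p + b \<le> n" "s < n"
  shows "homT_nz (K::'k::field itself) n ((t + p) mod n, b) ((t + s) mod n, d) \<longleftrightarrow>
     p \<le> s \<and> s < p + b \<and> p + b \<le> s + d"
proof -
  have "(p + i) mod n = s mod n \<longleftrightarrow> p + i = s" if "i < b" for i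
    using assms that by simp
  then have "homT_nz K n ((t + p) mod n, b) ((t + s) mod n, d) \<longleftrightarrow>
      (\<exists>i<b. b - i \<le> d \<and> p + i = s)"
    unfolding homT_nz_offsets_iff by blast
  also have "\<dots> \<longleftrightarrow> p \<le> s \<and> s < p + b \<and> p + b \<le> s + d"
    by (auto intro!: exI[of _ "s - p"])
  finally show ?thesis .
qed

lemma pred_mod:
  assumes "p < (n::nat)"
  shows "(p + n - 1) mod n = (if p = 0 then n - 1 else p - 1)"
  using assms by (cases p) simp_all

lemma tau_offset:
  assumes "1 \<le> n"
  shows "tau n ((t + s) mod n, d) = ((t + (s + n - 1) mod n) mod n, d)"
proof -
  have "((t + s) mod n + n - 1) mod n = ((t + s) mod n + (n - 1)) mod n" using assms by simp
  also have "\<dots> = (t + (s + (n - 1)) mod n) mod n"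
    by (simp add: mod_add_left_eq mod_add_right_eq add.assoc)
  also have "s + (n - 1) = s + n - 1" using assms by simp
  finally show ?thesis unfolding tau_def by simp
qed

text \<open>The arc [p, q] stands for the object (t + p, q - p).  Arcs sharing an endpoint count as
  crossing: (t + p, q - p) and (t + q, b) have a nonzero extension.\<close>
definition arcs_cross :: "nat \<Rightarrow> nat \<Rightarrow> nat \<Rightarrow> nat \<Rightarrow> bool" where
  "arcs_cross p q p' q' \<longleftrightarrow> p < p' \<and> p' \<le> q \<and> q < q' \<or> p' < p \<and> p \<le> q' \<and> q' < q"

lemma arcs_cross_commute: "arcs_cross p q p' q' \<longleftrightarrow> arcs_cross p' q' p q"
  unfolding arcs_cross_def by blast

lemma ExtC_zero_offsets_iff:
  assumes "2 \<le> n" "p + b \<le> n - 1" "p' + d \<le> n - 1"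
  shows "ExtC_zero (K::'k::field itself) n ((t + p) mod n, b) ((t + p') mod n, d) \<longleftrightarrow>
     \<not> arcs_cross p (p + b) p' (p' + d)"
proof -
  have "p < n" "p' < n" "1 \<le> n" using assms by auto
  then show ?thesis
    unfolding ExtC_zero_def tau_offset[OF \<open>1 \<le> n\<close>] pred_mod[OF \<open>p < n\<close>] pred_mod[OF \<open>p' < n\<close>]
      arcs_cross_def
    using assms by (subst (1 2) homT_nz_offsets_in_range_iff) (auto split: if_splits)
qed

lemma Dmap_nz_offsets_iff:
  assumes "2 \<le> n" "p + b \<le> n - 1" "p' + d \<le> n - 1" "1 \<le> b" "1 \<le> d"
  shows "Dmap_nz (K::'k::field itself) n ((t + p) mod n, b) ((t + p') mod n, d) \<longleftrightarrow>
     p = 0 \<and> p' + d = n - 1 \<or> p' + 2 \<le> p \<and> p \<le> p' + d + 1 \<and> p' + d + 2 \<le> p + b"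
proof -
  have "p < n" "1 \<le> n" using assms by auto
  define q where "q = (if p = 0 then n - 1 else p - 1)"
  have "q < n" using \<open>p < n\<close> \<open>1 \<le> n\<close> by (auto simp: q_def)
  define r where "r = (if q = 0 then n - 1 else q - 1)"
  have "r < n" using \<open>q < n\<close> \<open>1 \<le> n\<close> by (auto simp: r_def)
  show ?thesis
    unfolding Dmap_nz_def tau_offset[OF \<open>1 \<le> n\<close>] pred_mod[OF \<open>p < n\<close>, folded q_def]
      pred_mod[OF \<open>q < n\<close>, folded r_def]
    using assms \<open>r < n\<close> by (subst homT_nz_offsets_in_range_iff) (auto simp: r_def q_def split: if_splits)
qed

text \<open>Splitting the shortest arc [a, e] enclosing two adjacent arcs [l, g] and [g + 1, r] at the
  junction g creates no crossing: an arc over the junction that crosses none of the three arcs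
  encloses both small ones, so by minimality it encloses [a, e].\<close>
lemma split_shortest_enclosing_arc:
  fixes a l g r e u v :: nat
  assumes "a \<le> l" "l < g" "g + 1 < r" "r \<le> e"
    and "\<not> arcs_cross u v a e" "\<not> arcs_cross u v l g" "\<not> arcs_cross u v (g + 1) r"
    and shortest: "u \<le> l \<Longrightarrow> r \<le> v \<Longrightarrow> e - a \<le> v - u"
  shows "\<not> arcs_cross u v a g" "\<not> arcs_cross u v (g + 1) e"
proof -
  note no_cross = assms(5-7)[unfolded arcs_cross_def]
  have encloses: "u \<le> a \<and> e \<le> v" if "u \<le> g" "g < v"
  proof -
    have "u \<le> l" "r \<le> v" using that no_cross(2,3) by auto
    with shortest no_cross(1) assms(1-4) show ?thesis by fastforce
  qed
  show "\<not> arcs_cross u v a g"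
    using no_cross(1) encloses assms(1-4) unfolding arcs_cross_def by fastforce
  show "\<not> arcs_cross u v (g + 1) e"
    using no_cross(1) encloses assms(1-4) unfolding arcs_cross_def by fastforce
qed

locale maximal_rigid_top =
  fixes K :: "'k::field itself" and n t :: nat and T :: "obj set"
  assumes two_le_n: "2 \<le> n"
    and maximal_rigid: "maximal_rigid K n T"
    and top_summand: "(t, n - 1) \<in> T"
begin

definition arc_start :: "obj \<Rightarrow> nat" where
  "arc_start X = (fst X + n - t) mod n"

abbreviation arc_end :: "obj \<Rightarrow> nat" where
  "arc_end X \<equiv> arc_start X + snd X"

lemma summand_ind: "X \<in> T \<Longrightarrow> ind n X"
  using maximal_rigid unfolding maximal_rigid_def by blast

lemma summands_ExtC_zero: "X \<in> T \<Longrightarrow> Y \<in> T \<Longrightarrow> ExtC_zero K n X Y"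
  using maximal_rigid unfolding maximal_rigid_def rigid_def by blast

lemma t_less_n: "t < n"
  using summand_ind[OF top_summand] by (simp add: ind_def)

lemma arc_start_less: "arc_start X < n"
  using two_le_n by (simp add: arc_start_def)

lemma arc_start_top: "arc_start (t, n - 1) = 0"
  using t_less_n by (simp add: arc_start_def)

lemma arc_start_offset:
  assumes "p < n"
  shows "arc_start ((t + p) mod n, b) = p"
proof -
  have "((t + p) mod n + n - t) mod n = ((t + p) mod n + (n - t)) mod n" using t_less_n by simp
  also have "\<dots> = (t + p + (n - t)) mod n" by (simp add: mod_add_left_eq)
  also have "t + p + (n - t) = p + n" using t_less_n by simp
  finally show ?thesis using assms by (simp add: arc_start_def)
qed

lemma summand_eq_offset:
  assumes "X \<in> T"
  shows "X = ((t + arc_start X) mod n, snd X)"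
proof -
  have "(t + arc_start X) mod n = (t + (fst X + n - t)) mod n"
    unfolding arc_start_def by (simp add: mod_add_right_eq)
  also have "t + (fst X + n - t) = fst X + n" using t_less_n by simp
  also have "(fst X + n) mod n = fst X" using summand_ind[OF assms] by (simp add: ind_def)
  finally show ?thesis by simp
qed

lemma fst_summand: "X \<in> T \<Longrightarrow> fst X = (t + arc_start X) mod n"
  using summand_eq_offset by (metis fst_conv)

lemma summand_offset_shift:
  "X \<in> T \<Longrightarrow> (fst X + k) mod n = (t + (arc_start X + k)) mod n"
  by (simp add: fst_summand mod_add_left_eq add.assoc)

lemma fst_summand_eq_offset_iff:
  assumes "X \<in> T" "q < n"
  shows "fst X = (t + q) mod n \<longleftrightarrow> arc_start X = q"
  using fst_summand[OF assms(1)] add_mod_cancel_left[of t "arc_start X" n q] arc_start_less assms(2)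
  by simp

lemma summand_in_top_wing:
  assumes X: "X \<in> T"
  shows "1 \<le> snd X" "arc_end X \<le> n - 1"
proof -
  define p b where "p = arc_start X" and "b = snd X"
  have X_eq: "X = ((t + p) mod n, b)" unfolding p_def b_def by (rule summand_eq_offset[OF X])
  have n1: "1 \<le> n" using two_le_n by simp
  show "1 \<le> snd X" using summand_ind[OF X] by (simp add: ind_def)
  have "b \<le> n - 1"
  proof (rule ccontr)
    assume "\<not> b \<le> n - 1"
    then have "homT_nz K n X (tau n X)"
      unfolding X_eq tau_offset[OF n1] homT_nz_offsets_iff using n1
      by (intro exI[of _ "n - 1"]) (auto simp: add.assoc)
    then show False using summands_ExtC_zero[OF X X] unfolding ExtC_zero_def by blast
  qed
  moreover have "p + b \<le> n - 1"
  proof (rule ccontr)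
    assume "\<not> p + b \<le> n - 1"
    then have "homT_nz K n X (tau n ((t + 0) mod n, n - 1))"
      unfolding X_eq tau_offset[OF n1] homT_nz_offsets_iff
      using \<open>b \<le> n - 1\<close> arc_start_less[of X] n1 p_def
      by (intro exI[of _ "n - 1 - p"]) auto
    then show False
      using summands_ExtC_zero[OF X top_summand] t_less_n unfolding ExtC_zero_def by simp
  qed
  ultimately show "arc_end X \<le> n - 1" using p_def b_def by simp
qed

lemma summands_not_crossing:
  assumes "X \<in> T" "Y \<in> T"
  shows "\<not> arcs_cross (arc_start X) (arc_end X) (arc_start Y) (arc_end Y)"
proof -
  have "ExtC_zero K n ((t + arc_start X) mod n, snd X) ((t + arc_start Y) mod n, snd Y)"
    using summands_ExtC_zero[OF assms] summand_eq_offset[OF assms(1)] summand_eq_offset[OF assms(2)]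
    by simp
  then show ?thesis
    using ExtC_zero_offsets_iff[OF two_le_n] summand_in_top_wing(2)[OF assms(1)]
      summand_in_top_wing(2)[OF assms(2)] by blast
qed

lemma not_crossing_arc_summand:
  assumes "1 \<le> b" "p + b \<le> n - 1"
    and not_crossing: "\<And>W. W \<in> T \<Longrightarrow> \<not> arcs_cross p (p + b) (arc_start W) (arc_end W)"
  shows "((t + p) mod n, b) \<in> T"
proof -
  define N where "N = ((t + p) mod n, b)"
  have ExtC_zero_N: "ExtC_zero K n N Y \<and> ExtC_zero K n Y N" if "Y \<in> insert N T" for Y
  proof (cases "Y = N")
    case True
    then show ?thesis using ExtC_zero_offsets_iff[OF two_le_n assms(2) assms(2)]
      by (simp add: N_def arcs_cross_def)
  next
    case False
    then have Y: "Y \<in> T" using that by blast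
    have "ExtC_zero K n N ((t + arc_start Y) mod n, snd Y) \<and>
        ExtC_zero K n ((t + arc_start Y) mod n, snd Y) N"
      unfolding N_def
      using ExtC_zero_offsets_iff[OF two_le_n assms(2) summand_in_top_wing(2)[OF Y]]
        ExtC_zero_offsets_iff[OF two_le_n summand_in_top_wing(2)[OF Y] assms(2)]
        not_crossing[OF Y] arcs_cross_commute by blast
    then show ?thesis using summand_eq_offset[OF Y] by simp
  qed
  have "rigid K n (insert N T)"
    unfolding rigid_def
  proof (intro ballI)
    fix X Y assume "X \<in> insert N T" "Y \<in> insert N T"
    then show "ExtC_zero K n X Y"
      using ExtC_zero_N summands_ExtC_zero by blast
  qed
  moreover have "ind n N" using assms(1) two_le_n by (simp add: N_def ind_def)
  ultimately show ?thesis
    using maximal_rigid unfolding maximal_rigid_def N_def by blast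
qed

lemma Dmap_nz_summands_iff:
  assumes "Ti \<in> T" "Tj \<in> T"
  shows "Dmap_nz K n Ti Tj \<longleftrightarrow>
    arc_start Ti = 0 \<and> arc_end Tj = n - 1 \<or> arc_start Ti = arc_end Tj + 1"
proof -
  have "Dmap_nz K n Ti Tj \<longleftrightarrow>
      Dmap_nz K n ((t + arc_start Ti) mod n, snd Ti) ((t + arc_start Tj) mod n, snd Tj)"
    using summand_eq_offset[OF assms(1)] summand_eq_offset[OF assms(2)] by simp
  also have "\<dots> \<longleftrightarrow> arc_start Ti = 0 \<and> arc_end Tj = n - 1 \<or>
      arc_start Tj + 2 \<le> arc_start Ti \<and> arc_start Ti \<le> arc_end Tj + 1 \<and> arc_end Tj + 2 \<le> arc_end Ti"
    using Dmap_nz_offsets_iff[OF two_le_n summand_in_top_wing(2)[OF assms(1)]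
        summand_in_top_wing(2)[OF assms(2)] summand_in_top_wing(1)[OF assms(1)]
        summand_in_top_wing(1)[OF assms(2)]] by (simp add: add.assoc)
  also have "\<dots> \<longleftrightarrow> arc_start Ti = 0 \<and> arc_end Tj = n - 1 \<or> arc_start Ti = arc_end Tj + 1"
    using summands_not_crossing[OF assms(2,1)] summand_in_top_wing(1)[OF assms(1)]
      summand_in_top_wing(1)[OF assms(2)]
    unfolding arcs_cross_def by linarith
  finally show ?thesis .
qed

lemma left_edge_summand_iff:
  assumes "Y \<in> T" "Z \<in> T"
  shows "Y \<in> left_edge n Z \<longleftrightarrow> arc_start Y = arc_start Z \<and> snd Y \<le> snd Z"
proof -
  have "Y \<in> left_edge n Z \<longleftrightarrow> fst Y = fst Z \<and> snd Y \<le> snd Z"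
    using summand_in_top_wing(1)[OF assms(1)] by (cases Y) (auto simp: left_edge_def)
  also have "fst Z = (t + arc_start Z) mod n" by (rule fst_summand[OF assms(2)])
  finally show ?thesis
    using fst_summand_eq_offset_iff[OF assms(1) arc_start_less] by simp
qed

lemma right_edge_summand_iff:
  assumes "Y \<in> T" "Z \<in> T"
  shows "Y \<in> right_edge n Z \<longleftrightarrow> arc_end Y = arc_end Z \<and> snd Y \<le> snd Z"
proof -
  have "Y \<in> right_edge n Z \<longleftrightarrow> fst Y = (fst Z + (snd Z - snd Y)) mod n \<and> snd Y \<le> snd Z"
    using summand_in_top_wing(1)[OF assms(1)] by (cases Y) (auto simp: right_edge_def)
  also have "\<dots> \<longleftrightarrow> arc_start Y = arc_start Z + (snd Z - snd Y) \<and> snd Y \<le> snd Z"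
    using summand_offset_shift[OF assms(2)] fst_summand_eq_offset_iff[OF assms(1)]
      summand_in_top_wing(2)[OF assms(2)] two_le_n by auto
  finally show ?thesis by auto
qed

lemma subwing_triple_summands_iff:
  assumes "X \<in> T" "Y \<in> T" "Z \<in> T"
  shows "subwing_triple n X Y Z \<longleftrightarrow> arc_start Y = arc_start X \<and>
    arc_start Z = arc_end Y + 1 \<and> arc_end Z = arc_end X"
proof
  assume "subwing_triple n X Y Z"
  then obtain a b c where X: "X = (a, b)" and Y: "Y = (a, c)"
    and Z: "Z = ((a + c + 1) mod n, b - c - 1)" and "3 \<le> b" "1 \<le> c" "c \<le> b - 2"
    unfolding subwing_triple_def by blast
  have "fst Z = (t + (arc_start X + (c + 1))) mod n"
    using summand_offset_shift[OF assms(1), of "c + 1"] X Z by (simp add: add.assoc)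
  moreover have "arc_start X + c + 1 < n"
    using summand_in_top_wing(2)[OF assms(1)] X \<open>3 \<le> b\<close> \<open>c \<le> b - 2\<close> by simp
  ultimately have "arc_start Z = arc_start X + c + 1"
    using fst_summand_eq_offset_iff[OF assms(3)] by (metis add.assoc)
  moreover have "arc_start Y = arc_start X" using X Y by (simp add: arc_start_def)
  ultimately show "arc_start Y = arc_start X \<and> arc_start Z = arc_end Y + 1 \<and> arc_end Z = arc_end X"
    using X Y Z \<open>c \<le> b - 2\<close> \<open>1 \<le> c\<close> by simp
next
  assume arcs: "arc_start Y = arc_start X \<and> arc_start Z = arc_end Y + 1 \<and> arc_end Z = arc_end X"
  have Y1: "1 \<le> snd Y" and Z1: "1 \<le> snd Z" using summand_in_top_wing(1) assms by auto
  have "fst Y = fst X"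
    using arcs summand_eq_offset[OF assms(1)] summand_eq_offset[OF assms(2)] by (metis fst_conv)
  moreover have "fst Z = (fst X + snd Y + 1) mod n"
    using arcs summand_offset_shift[OF assms(1), of "snd Y + 1"] summand_eq_offset[OF assms(3)]
    by (metis add.assoc fst_conv)
  moreover have "snd Z = snd X - snd Y - 1" using arcs by linarith
  ultimately show "subwing_triple n X Y Z"
    unfolding subwing_triple_def
    using arcs Y1 Z1 summand_ind[OF assms(1)] summand_in_top_wing(2)[OF assms(1)]
    by (intro exI[of _ "fst X"] exI[of _ "snd X"] exI[of _ "snd Y"]) (auto simp: ind_def prod_eq_iff)
qed

lemma adjacent_summands_subwing_triple:
  assumes Ti: "Ti \<in> T" and Tj: "Tj \<in> T" and adjacent: "arc_start Ti = arc_end Tj + 1"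
  obtains X Y Z where "X \<in> T" "Y \<in> T" "Z \<in> T" "subwing_triple n X Y Z"
    "Ti \<in> left_edge n Z" "Tj \<in> right_edge n Y"
proof -
  define l g r where "l = arc_start Tj" and "g = arc_end Tj" and "r = arc_end Ti"
  define encloses where "encloses W \<longleftrightarrow> W \<in> T \<and> arc_start W \<le> l \<and> r \<le> arc_end W" for W
  have "encloses (t, n - 1)"
    using top_summand arc_start_top summand_in_top_wing(2)[OF Ti] by (simp add: encloses_def r_def)
  then obtain X where "encloses X" and shortest: "\<And>W. encloses W \<Longrightarrow> snd X \<le> snd W"
    using ex_has_least_nat[of encloses _ snd] by blast
  then have X: "X \<in> T" unfolding encloses_def by blast
  define a e where "a = arc_start X" and "e = arc_end X"
  have bounds: "a \<le> l" "l < g" "g + 1 < r" "r \<le> e" "e \<le> n - 1"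
    using \<open>encloses X\<close> adjacent summand_in_top_wing[OF Ti] summand_in_top_wing[OF Tj]
      summand_in_top_wing(2)[OF X]
    unfolding encloses_def a_def e_def l_def g_def r_def by auto
  have not_crossing: "\<not> arcs_cross (arc_start W) (arc_end W) a g"
      "\<not> arcs_cross (arc_start W) (arc_end W) (g + 1) e" if W: "W \<in> T" for W
    using split_shortest_enclosing_arc[OF bounds(1-4)] shortest[of W] W
      summands_not_crossing[OF W X] summands_not_crossing[OF W Tj] summands_not_crossing[OF W Ti]
    unfolding encloses_def a_def e_def l_def g_def r_def adjacent by auto
  define Y Z where "Y = ((t + a) mod n, g - a)" and "Z = ((t + (g + 1)) mod n, e - g - 1)"
  have "Y \<in> T" "Z \<in> T"
    unfolding Y_def Z_def using bounds not_crossing arcs_cross_commute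
    by (intro not_crossing_arc_summand; simp)+
  moreover have "arc_start Y = a" "arc_start Z = g + 1"
    unfolding Y_def Z_def using bounds by (intro arc_start_offset; linarith)+
  ultimately have "subwing_triple n X Y Z" "Ti \<in> left_edge n Z" "Tj \<in> right_edge n Y"
    using bounds adjacent X Ti Tj unfolding subwing_triple_summands_iff[OF X \<open>Y \<in> T\<close> \<open>Z \<in> T\<close>]
      left_edge_summand_iff[OF Ti \<open>Z \<in> T\<close>] right_edge_summand_iff[OF Tj \<open>Y \<in> T\<close>]
    by (auto simp: Y_def Z_def a_def e_def l_def g_def r_def)
  with X \<open>Y \<in> T\<close> \<open>Z \<in> T\<close> show ?thesis by (rule that)
qed

lemma Dmap_nz_iff_subwing_triple_or_top_edges:
  assumes Ti: "Ti \<in> T" and Tj: "Tj \<in> T"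
  shows "Dmap_nz K n Ti Tj \<longleftrightarrow>
    (\<exists>X\<in>T. \<exists>Y\<in>T. \<exists>Z\<in>T. subwing_triple n X Y Z \<and> Ti \<in> left_edge n Z \<and> Tj \<in> right_edge n Y) \<or>
    Ti \<in> left_edge n (t, n - 1) \<and> Tj \<in> right_edge n (t, n - 1)"
    (is "_ \<longleftrightarrow> ?subwing \<or> _")
proof -
  have "?subwing \<longleftrightarrow> arc_start Ti = arc_end Tj + 1"
  proof
    assume ?subwing
    then show "arc_start Ti = arc_end Tj + 1"
      using subwing_triple_summands_iff left_edge_summand_iff[OF Ti] right_edge_summand_iff[OF Tj]
      by fastforce
  qed (use adjacent_summands_subwing_triple[OF Ti Tj] in blast)
  moreover have "Ti \<in> left_edge n (t, n - 1) \<and> Tj \<in> right_edge n (t, n - 1) \<longleftrightarrow>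
      arc_start Ti = 0 \<and> arc_end Tj = n - 1"
    using left_edge_summand_iff[OF Ti top_summand] right_edge_summand_iff[OF Tj top_summand]
      arc_start_top summand_in_top_wing(2)[OF Ti] summand_in_top_wing(2)[OF Tj] by auto
  ultimately show ?thesis using Dmap_nz_summands_iff[OF Ti Tj] by blast
qed

end

theorem lemma2p9:
  fixes K :: "'k::alg_closed_field itself"
    and n :: nat and T :: "obj set" and T1 Ti Tj :: obj
  assumes "2 \<le> n"
    and "maximal_rigid K n T"
    and "T1 \<in> T" and "snd T1 = n - 1"
    and "Ti \<in> T" and "Tj \<in> T"
  shows "Dmap_nz K n Ti Tj \<longleftrightarrow>
    ((\<exists>Tx\<in>T. \<exists>Ty\<in>T. \<exists>Tz\<in>T. subwing_triple n Tx Ty Tz \<and>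
        Ti \<in> left_edge n Tz \<and> Tj \<in> right_edge n Ty)
     \<or> (Ti \<in> left_edge n T1 \<and> Tj \<in> right_edge n T1))"
proof -
  obtain t where T1: "T1 = (t, n - 1)" using assms(4) by (metis prod.collapse)
  interpret maximal_rigid_top K n t T
    using assms(1-3) T1 by unfold_locales simp_all
  show ?thesis using Dmap_nz_iff_subwing_triple_or_top_edges[OF assms(5,6)] T1 by simp
qed

end
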